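(* For every partition $\mu$ of $n$, the restriction of the $\mathsf T$-equivariant Gamma class $\Gamma_{\mathrm{Sym}}$ of $\mathrm{Sym}^n(\mathbb C^2)$ to the inertia component $I_\mu$ is $$\Gamma_{\mathrm{Sym}}\big|_{\mu}=(t_1t_2)^{\ell(\mu)}(2\pi)^{n-\ell(\mu)}\Big(\prod_i\mu_i\Big)\Big(\prod_i\mu_i^{-\mu_it_1}\mu_i^{-\mu_it_2}\Big)\Big(\prod_i\Gamma(\mu_it_1)\Gamma(\mu_it_2)\Big).$$
   Context: $\mathsf T=(\mathbb C^* )^2$ acts on $\mathbb C^2$ with equivariant parameters $t_1,t_2$, hence on $\mathrm{Sym}^n(\mathbb C^2)=[(\mathbb C^2)^n/S_n]$. The inertia stack $I\mathrm{Sym}^n(\mathbb C^2)$ is a disjoint union of components $I_\mu=[(\mathbb C^{2n})_\sigma/C(\sigma)]$ indexed by partitions $\mu$ of $n$, where $\sigma\in S_n$ has cycle type $\mu=(\mu_1,\dots,\mu_{\ell(\mu)})$, $(\mathbb C^{2n})_\sigma$ is the $\sigma$-invariant subspace and $C(\sigma)$ the centralizer. Iritani's Gamma class of a $\mathsf T$-equivariant vector bundle $\mathcal V$ on a Deligne–Mumford stack $\mathcal X$: on each inertia component $\mathcal X_i$ with stabilizer element $g_i$, decompose $\mathcal V|_{\mathcal X_i}=\bigoplus_{0\le f<1}\mathcal V_{i,f}$ with $g_i$ acting on $\mathcal V_{i,f}$ by $e^{2\pi\sqrt{-1}f}$, and let $\delta_{i,f,j}$ be the $\mathsf T$-equivariant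 Chern roots of $\mathcal V_{i,f}$; then $\Gamma(\mathcal V)=\bigoplus_i\prod_f\prod_j\Gamma(1-f+\delta_{i,f,j})$. $\Gamma_{\mathrm{Sym}}=\Gamma(T\mathrm{Sym}^n(\mathbb C^2))$. *)

theory Defs
  imports "HOL-Analysis.Analysis"
begin

text \<open>A T-equivariant orbifold vector bundle restricted to an inertia component is recorded
  by the list of pairs (f, delta): f in [0,1) is the age (the stabiliser element acts by
  exp(2 pi i f) on the line) and delta is the T-equivariant Chern root of that line,
  as an element of H_T(pt) = C[t1,t2], evaluated at the equivariant parameters.\<close>

definition iritani_gamma :: "(real \<times> complex) list \<Rightarrow> complex" where
  "iritani_gamma V = (\<Prod>(f, \<delta>)\<leftarrow>V. Gamma (1 - complex_of_real f + \<delta>))"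

text \<open>Restriction of T Sym^n(C^2) = (C^2)^n to the inertia component I_mu, sigma of cycle
  type mu: a cycle of length m acts on C^m (x) C^2 with eigenvalues exp(2 pi i k/m),
  k = 0..m-1, each eigenline in C^m (x) C e_j having T-weight t_j.\<close>

definition tangent_Sym_at :: "nat list \<Rightarrow> complex \<Rightarrow> complex \<Rightarrow> (real \<times> complex) list" where
  "tangent_Sym_at \<mu> t1 t2 =
     concat (map (\<lambda>m. concat (map (\<lambda>k. [(real k / real m, t1), (real k / real m, t2)]) [0..<m])) \<mu>)"

definition Gamma_Sym_restr :: "nat list \<Rightarrow> complex \<Rightarrow> complex \<Rightarrow> complex" where
  "Gamma_Sym_restr \<mu> t1 t2 = iritani_gamma (tangent_Sym_at \<mu> t1 t2)"

end

theory Submission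
  imports Defs "HOL-Computational_Algebra.Polynomial"
begin

(* A cycle of length m of the permutation contributes the ages k/m (k < m), each with Chern
  roots t1 and t2, so its factor of the Gamma class is the product of Gamma (1 - k/m + t) over
  k < m, for t = t1 and t = t2. Reversing k and using Gamma (t + 1) = t Gamma t turns this into
  t times the product of Gamma (t + k/m), which Gauss's multiplication formula evaluates as
  t (2 pi)^((m-1)/2) m^(1/2 - m t) Gamma (m t).
  Gauss's formula follows from Euler's limit for Gamma, because the Pochhammer symbol of m z of
  length m n splits into the m Pochhammer symbols of z + k/m of length n; its constant is found
  at z = 1/m from the reflection formula and the identity prod_{0<j<m} 2 sin (pi j/m) = m. *)

lemma pochhammer_mult_of_nat:
  fixes z :: "'a :: field_char_0"
  assumes "m > 0"
  shows "pochhammer (of_nat m * z) (m * n)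
    = of_nat m ^ (m * n) * (\<Prod>k<m. pochhammer (z + of_nat k / of_nat m) n)"
proof (induction n)
  case 0
  then show ?case by simp
next
  case (Suc n)
  have block: "pochhammer (of_nat m * (z + of_nat n)) m
      = of_nat m ^ m * (\<Prod>k<m. z + of_nat k / of_nat m + of_nat n)"
  proof -
    have "pochhammer (of_nat m * (z + of_nat n)) m
        = (\<Prod>k<m. of_nat m * (z + of_nat k / of_nat m + of_nat n))"
      unfolding pochhammer_prod atLeast0LessThan using assms by (intro prod.cong) (auto simp: field_simps)
    then show ?thesis by (simp add: prod.distrib)
  qed
  have "pochhammer (of_nat m * z) (m * Suc n)
      = pochhammer (of_nat m * z) (m * n) * pochhammer (of_nat m * (z + of_nat n)) m"
    using pochhammer_product'[of "of_nat m * z" "m * n" m] by (simp add: algebra_simps)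
  also have "\<dots> = of_nat m ^ (m * Suc n) *
      (\<Prod>k<m. pochhammer (z + of_nat k / of_nat m) n * (z + of_nat k / of_nat m + of_nat n))"
    unfolding Suc block by (simp add: prod.distrib power_add mult_ac)
  also have "\<dots> = of_nat m ^ (m * Suc n) * (\<Prod>k<m. pochhammer (z + of_nat k / of_nat m) (Suc n))"
    by (simp add: pochhammer_rec' mult.commute)
  finally show ?case .
qed

lemma add_of_nat_divide_notin_nonpos_Ints:
  fixes z :: "'a :: field_char_0"
  assumes "m > 0" "of_nat m * z \<notin> \<int>\<^sub>\<le>\<^sub>0"
  shows "z + of_nat k / of_nat m \<notin> \<int>\<^sub>\<le>\<^sub>0"
proof
  assume "z + of_nat k / of_nat m \<in> \<int>\<^sub>\<le>\<^sub>0"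
  then obtain j where "z + of_nat k / of_nat m = - of_nat j" by (elim nonpos_Ints_cases')
  then have "of_nat m * z = - of_nat (m * j + k)"
    using assms(1) by (simp add: field_simps) (simp add: algebra_simps eq_neg_iff_add_eq_0)
  with assms(2) show False by (metis minus_of_nat_in_nonpos_Ints)
qed

lemma Gamma_series'_multiplication:
  fixes z :: complex
  assumes m: "m > 0" and z: "of_nat m * z \<notin> \<int>\<^sub>\<le>\<^sub>0" and n: "n > 0"
  shows "of_nat m powr (of_nat m * z) * (\<Prod>k<m. Gamma_series' (z + of_nat k / of_nat m) n)
           / Gamma_series' (of_nat m * z) (m * n)
         = fact (n - 1) ^ m * (\<Prod>k<m. exp (of_nat k / of_nat m * of_real (ln (real n))))
           * of_nat m ^ (m * n) / fact (m * n - 1)"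
proof -
  define L where "L = complex_of_real (ln (real n))"
  define P where "P = (\<Prod>k<m. pochhammer (z + of_nat k / of_nat m) n)"
  define E where "E = (\<Prod>k<m. exp (of_nat k / of_nat m * L))"
  have "P \<noteq> 0"
    unfolding P_def using add_of_nat_divide_notin_nonpos_Ints[OF m z]
    by (auto dest: pochhammer_eq_0_imp_nonpos_Int)
  have factors: "(\<Prod>k<m. Gamma_series' (z + of_nat k / of_nat m) n)
      = fact (n - 1) ^ m * exp (of_nat m * z * L) * E / P"
  proof -
    have "(\<Prod>k<m. Gamma_series' (z + of_nat k / of_nat m) n) =
      (\<Prod>k<m. fact (n - 1) * (exp (z * L) * exp (of_nat k / of_nat m * L))
                / pochhammer (z + of_nat k / of_nat m) n)"
      unfolding Gamma_series'_def L_def by (intro prod.cong refl) (simp add: exp_add[symmetric] algebra_simps)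
    also have "\<dots> = fact (n - 1) ^ m * exp (z * L) ^ m * E / P"
      unfolding E_def P_def by (simp add: prod_dividef prod.distrib)
    finally show ?thesis
      by (simp add: exp_of_nat_mult[symmetric] mult_ac)
  qed
  have "ln (real (m * n)) = ln (real m) + ln (real n)"
    using m n by (simp add: ln_mult)
  then have product: "Gamma_series' (of_nat m * z) (m * n)
      = fact (m * n - 1) * (of_nat m powr (of_nat m * z) * exp (of_nat m * z * L)) / (of_nat m ^ (m * n) * P)"
    unfolding Gamma_series'_def pochhammer_mult_of_nat[OF m] P_def L_def
    using m by (simp add: powr_def exp_add[symmetric] algebra_simps)
  show ?thesis
    unfolding factors product E_def[symmetric] L_def[symmetric]
    using \<open>P \<noteq> 0\<close> m by (simp add: field_simps)
qed

lemma Gamma_multiplication_up_to_constant: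
  assumes m: "m > 0"
  obtains C :: complex where "\<And>z. of_nat m * z \<notin> \<int>\<^sub>\<le>\<^sub>0 \<Longrightarrow>
    (\<Prod>k<m. Gamma (z + of_nat k / of_nat m)) = C * of_nat m powr (- of_nat m * z) * Gamma (of_nat m * z)"
proof
  define R where "R n = fact (n - 1) ^ m * (\<Prod>k<m. exp (of_nat k / of_nat m * of_real (ln (real n))))
           * of_nat m ^ (m * n) / (fact (m * n - 1) :: complex)" for n
  fix z :: complex
  assume z: "of_nat m * z \<notin> \<int>\<^sub>\<le>\<^sub>0"
  define G where "G = of_nat m powr (of_nat m * z) * (\<Prod>k<m. Gamma (z + of_nat k / of_nat m))
    / Gamma (of_nat m * z)"
  have "strict_mono (\<lambda>n::nat. m * n)"
    using m by (auto simp: strict_mono_def)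
  then have "(\<lambda>n. Gamma_series' (of_nat m * z) (m * n)) \<longlonglongrightarrow> Gamma (of_nat m * z)"
    using LIMSEQ_subseq_LIMSEQ[OF Gamma_series'_LIMSEQ] by (simp add: o_def)
  moreover have "Gamma (of_nat m * z) \<noteq> 0"
    using z by (simp add: Gamma_eq_zero_iff)
  ultimately have "(\<lambda>n. of_nat m powr (of_nat m * z) * (\<Prod>k<m. Gamma_series' (z + of_nat k / of_nat m) n)
      / Gamma_series' (of_nat m * z) (m * n)) \<longlonglongrightarrow> G"
    unfolding G_def by (intro tendsto_intros Gamma_series'_LIMSEQ) auto
  moreover have "\<forall>\<^sub>F n in sequentially. of_nat m powr (of_nat m * z)
      * (\<Prod>k<m. Gamma_series' (z + of_nat k / of_nat m) n) / Gamma_series' (of_nat m * z) (m * n) = R n"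
    using eventually_gt_at_top[of 0]
    by eventually_elim (simp add: R_def Gamma_series'_multiplication[OF m z])
  ultimately have "R \<longlonglongrightarrow> G"
    by (rule Lim_transform_eventually)
  then have "G = lim R"
    by (simp add: limI)
  with \<open>Gamma (of_nat m * z) \<noteq> 0\<close> m show "(\<Prod>k<m. Gamma (z + of_nat k / of_nat m))
      = lim R * of_nat m powr (- of_nat m * z) * Gamma (of_nat m * z)"
    unfolding G_def by (simp add: field_simps powr_minus)
qed

lemma prod_one_minus_root_unity:
  assumes m: "m > 0"
  shows "(\<Prod>j\<in>{1..<m}. 1 - exp (2 * of_real pi * \<i> * of_nat j / of_nat m)) = (of_nat m :: complex)"
proof -
  define w where "w j = exp (2 * of_real pi * \<i> * of_nat j / of_nat m)" for j :: nat
  define p where "p = (\<Prod>j\<in>{1..<m}. [:- w j, 1:])"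
  define q where "q = (\<Sum>i<m. monom (1 :: complex) i)"
  have "p = q"
  proof (rule poly_eqI_degree_lead_coeff[of p "m - 1" q "w ` {1..<m}"])
    have "inj_on w {1..<m}"
      unfolding w_def inj_on_def using m by (subst complex_root_unity_eq) auto
    then show "m - 1 \<le> card (w ` {1..<m})"
      by (simp add: card_image)
    have "degree p = m - 1"
      unfolding p_def by (subst degree_prod_eq_sum_degree) auto
    moreover have "lead_coeff p = 1"
      unfolding p_def lead_coeff_prod by simp
    ultimately show "degree p \<le> m - 1" "coeff p (m - 1) = coeff q (m - 1)"
      using m unfolding q_def by (simp_all add: coeff_sum)
    show "degree q \<le> m - 1"
      unfolding q_def by (intro degree_sum_le) (auto intro: order.trans[OF degree_monom_le])
    fix z assume "z \<in> w ` {1..<m}"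
    then obtain j where j: "j \<in> {1..<m}" "z = w j" by auto
    have "poly p z = 0"
      unfolding p_def poly_prod using j by (auto intro: prod_zero)
    moreover have "poly q z = 0"
    proof -
      have "z \<noteq> 1"
        unfolding j(2) w_def using m j(1) by (subst complex_root_unity_eq_1) (auto dest: dvd_imp_le)
      moreover have "z ^ m = 1"
        unfolding j(2) w_def using m by (intro complex_root_unity) simp
      ultimately show ?thesis
        unfolding q_def poly_sum poly_monom by (simp add: geometric_sum)
    qed
    ultimately show "poly p z = poly q z" by simp
  qed
  then have "poly p 1 = poly q 1" by simp
  then show ?thesis unfolding p_def q_def poly_prod poly_sum poly_monom w_def by simp
qed

lemma norm_one_minus_cis: "norm (1 - cis t) = 2 * \<bar>sin (t / 2)\<bar>"
proof -
  have "cos t = 1 - 2 * (sin (t / 2))\<^sup>2" "sin t = 2 * sin (t / 2) * cos (t / 2)"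
    using cos_double_sin[of "t / 2"] sin_double[of "t / 2"] by simp_all
  then have "(1 - cos t)\<^sup>2 + (sin t)\<^sup>2 = (2 * sin (t / 2))\<^sup>2 * ((sin (t / 2))\<^sup>2 + (cos (t / 2))\<^sup>2)"
    by algebra
  then show ?thesis
    by (simp add: cmod_def real_sqrt_mult real_sqrt_abs)
qed

lemma prod_sin_pi_divide:
  assumes m: "m > 0"
  shows "(\<Prod>j\<in>{1..<m}. 2 * sin (pi * real j / real m)) = real m"
proof -
  have "(\<Prod>j\<in>{1..<m}. 2 * sin (pi * real j / real m))
      = (\<Prod>j\<in>{1..<m}. norm (1 - exp (2 * of_real pi * \<i> * of_nat j / of_nat m)))"
  proof (intro prod.cong refl)
    fix j assume j: "j \<in> {1..<m}"
    have "0 < sin (pi * real j / real m)"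
      using j by (intro sin_gt_zero) (auto simp: field_simps)
    moreover have "exp (2 * of_real pi * \<i> * of_nat j / of_nat m) = cis (2 * (pi * real j / real m))"
      unfolding cis_conv_exp by (simp add: mult_ac)
    ultimately show "2 * sin (pi * real j / real m) = norm (1 - exp (2 * of_real pi * \<i> * of_nat j / of_nat m))"
      by (simp add: norm_one_minus_cis)
  qed
  also have "\<dots> = norm (\<Prod>j\<in>{1..<m}. 1 - exp (2 * of_real pi * \<i> * of_nat j / of_nat m))"
    by (simp add: prod_norm)
  also have "\<dots> = real m"
    by (simp only: prod_one_minus_root_unity[OF m] norm_of_nat)
  finally show ?thesis .
qed

lemma Gamma_reflection_real:
  fixes x :: real
  shows "Gamma x * Gamma (1 - x) = pi / sin (pi * x)"
proof -
  have "complex_of_real (Gamma x * Gamma (1 - x)) = Gamma (of_real x) * Gamma (1 - of_real x)"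
    by (simp flip: Gamma_complex_of_real)
  also have "\<dots> = complex_of_real (pi / sin (pi * x))"
    by (simp add: Gamma_reflection_complex flip: sin_of_real)
  finally show ?thesis by (simp only: of_real_eq_iff)
qed

lemma prod_Gamma_divide_squared:
  assumes m: "m > 0"
  shows "(\<Prod>j\<in>{1..<m}. Gamma (real j / real m))\<^sup>2 = (2 * pi) ^ (m - 1) / real m"
proof -
  have "(\<Prod>j\<in>{1..<m}. Gamma (real j / real m)) = (\<Prod>j\<in>{1..<m}. Gamma (1 - real j / real m))"
    by (subst prod.atLeastLessThan_rev) (auto intro!: prod.cong simp: of_nat_diff field_simps)
  then have "(\<Prod>j\<in>{1..<m}. Gamma (real j / real m))\<^sup>2
      = (\<Prod>j\<in>{1..<m}. Gamma (real j / real m) * Gamma (1 - real j / real m))"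
    by (simp add: power2_eq_square prod.distrib)
  also have "\<dots> = (\<Prod>j\<in>{1..<m}. pi / sin (pi * real j / real m))"
    by (simp add: Gamma_reflection_real)
  also have "\<dots> = pi ^ (m - 1) * 2 ^ (m - 1) / (\<Prod>j\<in>{1..<m}. 2 * sin (pi * real j / real m))"
    by (simp add: prod_dividef prod.distrib)
  also have "\<dots> = (2 * pi) ^ (m - 1) / real m"
    unfolding prod_sin_pi_divide[OF m] by (simp add: power_mult_distrib)
  finally show ?thesis .
qed

theorem Gamma_multiplication:
  fixes z :: complex
  assumes m: "m > 0" and z: "of_nat m * z \<notin> \<int>\<^sub>\<le>\<^sub>0"
  shows "(\<Prod>k<m. Gamma (z + of_nat k / of_nat m))
    = of_real (sqrt ((2 * pi) ^ (m - 1) * real m)) * of_nat m powr (- of_nat m * z) * Gamma (of_nat m * z)"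
proof -
  obtain C where C: "\<And>z :: complex. of_nat m * z \<notin> \<int>\<^sub>\<le>\<^sub>0 \<Longrightarrow>
      (\<Prod>k<m. Gamma (z + of_nat k / of_nat m)) = C * of_nat m powr (- of_nat m * z) * Gamma (of_nat m * z)"
    using Gamma_multiplication_up_to_constant[OF m] by blast
  define Q where "Q = (\<Prod>j\<in>{1..<m}. Gamma (real j / real m))"
  have "complex_of_real Q = (\<Prod>k<m. Gamma (1 / of_nat m + of_nat k / of_nat m))"
  proof -
    have "complex_of_real Q = complex_of_real (\<Prod>j\<in>{1..<Suc m}. Gamma (real j / real m))"
      using m by (simp add: Q_def prod.atLeastLessThan_Suc)
    also have "\<dots> = (\<Prod>k<m. complex_of_real (Gamma (real (Suc k) / real m)))"
      by (simp only: atLeastLessThanSuc_atLeastAtMost prod.atLeast1_atMost_eq of_real_prod One_nat_def)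
    also have "\<dots> = (\<Prod>k<m. Gamma (1 / of_nat m + of_nat k / of_nat m))"
      by (intro prod.cong refl) (simp add: add_divide_distrib flip: Gamma_complex_of_real)
    finally show ?thesis .
  qed
  also have "\<dots> = C * of_nat m powr (- 1)"
    using C[of "1 / of_nat m"] m by simp
  finally have "C = of_real (real m * Q)"
    using m by (simp add: powr_minus field_simps)
  also have "real m * Q = sqrt ((2 * pi) ^ (m - 1) * real m)"
  proof -
    have "Q > 0"
      unfolding Q_def by (intro prod_pos) auto
    then have "real m * Q = sqrt ((real m * Q)\<^sup>2)"
      using m by simp
    also have "(real m * Q)\<^sup>2 = (real m)\<^sup>2 * ((2 * pi) ^ (m - 1) / real m)"
      unfolding Q_def power_mult_distrib prod_Gamma_divide_squared[OF m] ..
    also have "\<dots> = (2 * pi) ^ (m - 1) * real m"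
      using m by (simp add: power2_eq_square)
    finally show ?thesis .
  qed
  finally show ?thesis
    using C[OF z] by simp
qed

lemma prod_Gamma_one_minus_divide_add:
  fixes t :: complex
  assumes m: "m > 0" and t: "t \<notin> \<int>\<^sub>\<le>\<^sub>0"
  shows "(\<Prod>k<m. Gamma (1 - complex_of_real (real k / real m) + t))
    = t * (\<Prod>k<m. Gamma (t + of_nat k / of_nat m))"
proof -
  define f where "f k = Gamma (t + of_nat k / of_nat m)" for k
  have "(\<Prod>k<m. Gamma (1 - complex_of_real (real k / real m) + t)) = (\<Prod>k<m. f (Suc k))"
    unfolding lessThan_atLeast0
    by (subst prod.atLeastLessThan_rev) (auto intro!: prod.cong simp: f_def of_nat_diff field_simps)
  moreover have "f 0 * (\<Prod>k<m. f (Suc k)) = f 0 * (t * (\<Prod>k<m. f k))"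
  proof -
    have "f 0 * (\<Prod>k<m. f (Suc k)) = (\<Prod>k<m. f k) * f m"
      by (simp add: prod.lessThan_Suc_shift flip: prod.lessThan_Suc)
    also have "f m = t * f 0"
      unfolding f_def using m t by (simp add: Gamma_plus1)
    finally show ?thesis by (simp add: mult_ac)
  qed
  moreover have "f 0 \<noteq> 0"
    unfolding f_def using t by (simp add: Gamma_eq_zero_iff)
  ultimately show ?thesis
    by (simp add: f_def)
qed

lemma prod_list_map_concat:
  "prod_list (map g (concat (map F xs))) = prod_list (map (\<lambda>x. prod_list (map g (F x))) xs)"
  by (induction xs) auto

(* Not a simp rule: it would loop on Gamma_Sym_restr [m] = Gamma_Sym_restr (m # []). *)
lemma Gamma_Sym_restr_Cons:
  "Gamma_Sym_restr (m # \<mu>) t1 t2 = Gamma_Sym_restr [m] t1 t2 * Gamma_Sym_restr \<mu> t1 t2"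
  by (simp add: Gamma_Sym_restr_def tangent_Sym_at_def iritani_gamma_def)

lemma Gamma_Sym_restr_cycle:
  fixes t1 t2 :: complex
  assumes m: "m > 0" and t1: "of_nat m * t1 \<notin> \<int>\<^sub>\<le>\<^sub>0" and t2: "of_nat m * t2 \<notin> \<int>\<^sub>\<le>\<^sub>0"
  shows "Gamma_Sym_restr [m] t1 t2
    = t1 * t2 * (2 * complex_of_real pi) ^ (m - 1) * of_nat m
      * (of_nat m powr (- of_nat m * t1) * of_nat m powr (- of_nat m * t2))
      * (Gamma (of_nat m * t1) * Gamma (of_nat m * t2))"
proof -
  define c where "c = complex_of_real (sqrt ((2 * pi) ^ (m - 1) * real m))"
  have c_squared: "c * c = (2 * complex_of_real pi) ^ (m - 1) * of_nat m"
  proof -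
    have "c * c = complex_of_real ((2 * pi) ^ (m - 1) * real m)"
      unfolding c_def by (simp flip: of_real_mult)
    then show ?thesis by simp
  qed
  have factor: "(\<Prod>k<m. Gamma (1 - complex_of_real (real k / real m) + t))
      = t * c * of_nat m powr (- of_nat m * t) * Gamma (of_nat m * t)"
    if "of_nat m * t \<notin> \<int>\<^sub>\<le>\<^sub>0" for t :: complex
  proof -
    have t: "t \<notin> \<int>\<^sub>\<le>\<^sub>0"
      using add_of_nat_divide_notin_nonpos_Ints[OF m that, of 0] by simp
    show ?thesis
      unfolding prod_Gamma_one_minus_divide_add[OF m t] Gamma_multiplication[OF m that] c_def
      by (simp add: mult_ac)
  qed
  have "Gamma_Sym_restr [m] t1 t2
      = (\<Prod>k<m. Gamma (1 - complex_of_real (real k / real m) + t1)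
          * Gamma (1 - complex_of_real (real k / real m) + t2))"
    unfolding Gamma_Sym_restr_def tangent_Sym_at_def iritani_gamma_def prod_list_map_concat
    by (subst prod.distinct_set_conv_list[symmetric]) (auto simp: atLeast0LessThan)
  also have "\<dots> = (\<Prod>k<m. Gamma (1 - complex_of_real (real k / real m) + t1))
        * (\<Prod>k<m. Gamma (1 - complex_of_real (real k / real m) + t2))"
    by (rule prod.distrib)
  also have "\<dots> = t1 * t2 * (c * c) * (of_nat m powr (- of_nat m * t1) * of_nat m powr (- of_nat m * t2))
      * (Gamma (of_nat m * t1) * Gamma (of_nat m * t2))"
    unfolding factor[OF t1] factor[OF t2] by (simp add: mult_ac)
  finally show ?thesis
    unfolding c_squared by (simp add: mult_ac)
qed

lemma length_le_sum_list_pos: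
  fixes \<mu> :: "nat list"
  shows "\<forall>m\<in>set \<mu>. 0 < m \<Longrightarrow> length \<mu> \<le> sum_list \<mu>"
  by (induction \<mu>) auto

theorem lemma2:
  fixes n :: nat and \<mu> :: "nat list" and t1 t2 :: complex
  assumes "\<forall>m\<in>set \<mu>. 0 < m"
    and "sum_list \<mu> = n"
    and "\<forall>m\<in>set \<mu>. of_nat m * t1 \<notin> \<int>\<^sub>\<le>\<^sub>0 \<and> of_nat m * t2 \<notin> \<int>\<^sub>\<le>\<^sub>0"
  shows "Gamma_Sym_restr \<mu> t1 t2 =
    (t1 * t2) ^ length \<mu> * (2 * complex_of_real pi) ^ (n - length \<mu>)
    * (\<Prod>m\<leftarrow>\<mu>. of_nat m)
    * (\<Prod>m\<leftarrow>\<mu>. of_nat m powr (- of_nat m * t1) * of_nat m powr (- of_nat m * t2))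
    * (\<Prod>m\<leftarrow>\<mu>. Gamma (of_nat m * t1) * Gamma (of_nat m * t2))"
  using assms
proof (induction \<mu> arbitrary: n)
  case Nil
  then show ?case
    by (simp add: Gamma_Sym_restr_def tangent_Sym_at_def iritani_gamma_def)
next
  case (Cons m \<mu>)
  have m: "m > 0" and t1: "of_nat m * t1 \<notin> \<int>\<^sub>\<le>\<^sub>0" and t2: "of_nat m * t2 \<notin> \<int>\<^sub>\<le>\<^sub>0"
    using Cons.prems by auto
  have exponent: "n - length (m # \<mu>) = (m - 1) + (sum_list \<mu> - length \<mu>)"
    using Cons.prems length_le_sum_list_pos[of \<mu>] m by auto
  show ?case
    unfolding Gamma_Sym_restr_Cons[of m \<mu>] Gamma_Sym_restr_cycle[OF m t1 t2] exponent power_add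
    using Cons.prems by (simp add: Cons.IH mult_ac)
qed

end
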